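(* Suppose $\widehat Z^\natural$ satisfies the average case incoherence condition with parameter $\mu_0$, $\Omega$ follows the Bernoulli model with parameter $p\in(0,1]$, and $\widehat Z\in\mathbb C^{dn_1\times dn_2}$ is a fixed block diagonal matrix. Then with high probability $$\Big\|\Big(\tfrac1p\mathcal P_{\widehat T}\widehat{\mathcal G}\mathcal P_\Omega\widehat{\mathcal G}^*-\mathcal P_{\widehat T}\widehat{\mathcal G}\widehat{\mathcal G}^*\Big)\widehat Z\Big\|_{\widehat{\mathcal G},\infty}\le C\,\frac{\mu_0 r}{n}\Big(\sqrt{\tfrac{\log(dn)}{p}}\|\widehat Z\|_{\widehat{\mathcal G},F}+\tfrac{\log(dn)}{p}\|\widehat Z\|_{\widehat{\mathcal G},\infty}\Big)$$ for an absolute constant $C>0$.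
   Context: Let $d,n\ge1$ with $n$ odd and $n_1=n_2=(n+1)/2$. For $a\in[n]$, $w_a=\#\{(j,k)\in[n_1]\times[n_2]:j+k=a+1\}$, $G_a=w_a^{-1/2}\sum_{j+k=a+1}e_je_k^{\mathsf T}$, $\mathcal G(x)=\sum_ax_aG_a$. $F$ is the $d\times d$ unitary DFT matrix. $\widehat{\mathcal G}$ maps $X\in\mathbb C^{d\times n}$ to the block diagonal matrix whose $i$-th block is $\mathcal G$ of the $i$-th row of $FX$; $\widehat{\mathcal G}^*$ is its adjoint w.r.t. $\langle A,B\rangle=\mathrm{tr}(AB^{\mathsf H})$. $\widehat G_{j,k}=\widehat{\mathcal G}(e_je_k^{\mathsf T})=\mathrm{diag}(F_{1j}G_k,\dots,F_{dj}G_k)$. $\|\widehat Z\|_{\widehat{\mathcal G},F}=\big(\sum_{(j,k)}\frac1{dw_k}|\langle\widehat Z,\widehat G_{j,k}\rangle|^2\big)^{1/2}$, $\|\widehat Z\|_{\widehat{\mathcal G},\infty}=\max_{(j,k)}\frac1{\sqrt{dw_k}}|\langle\widehat Z,\widehat G_{j,k}\rangle|$. $\mathcal P_\Omega$ keeps entries in $\Omega\subset[d]\times[n]$ and zeroes the rest; Bernoulli model: each index in $\Omega$ independently with probability $p$. $\widehat Z^\natural=\mathrm{diag}(\widehat Z^\natural_a)$ with each block of rank $r$ and compact SVD $\widehat U_a\widehat\Sigma_a\widehat V_a^{\mathsf H}$; $\mathcal P_{\widehat T}$ acts blockwise by $W_a\mapsto\widehat U_a\widehat U_a^{\mathsf H}W_a+W_a\widehat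 V_a\widehat V_a^{\mathsf H}-\widehat U_a\widehat U_a^{\mathsf H}W_a\widehat V_a\widehat V_a^{\mathsf H}$. Average case incoherence with parameter $\mu_0$: $\max_i\frac1d\sum_a\|e_i^{\mathsf T}\widehat U_a\|_2^2\le\mu_0r/n$ and $\max_j\frac1d\sum_a\|e_j^{\mathsf T}\widehat V_a\|_2^2\le\mu_0r/n$. "With high probability": probability at least $1-c_1(dn)^{-c_2}$ for absolute constants $c_1,c_2>0$. *)

theory Defs
  imports Complex_Main
begin

text \<open>Conventions: all indices are 0-based. [n] = {0..<n}. A d x n matrix is a function
  nat => nat => complex read on {0..<d} x {0..<n}. A block diagonal matrix in
  C^{d n1 x d n2} with d blocks of size n1 x n2 is represented by the family of its
  diagonal blocks, a function nat => nat => nat => complex (block i, row j, column k).\<close>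

definition nh :: "nat \<Rightarrow> nat" where
  "nh n = (n + 1) div 2"   \<comment> \<open>n1 = n2 = (n+1)/2\<close>

definition wt :: "nat \<Rightarrow> nat \<Rightarrow> nat" where
  "wt n a = card {(j, k). j < nh n \<and> k < nh n \<and> j + k = a}"

definition Gbasis :: "nat \<Rightarrow> nat \<Rightarrow> nat \<Rightarrow> nat \<Rightarrow> complex" where
  "Gbasis n a j k = (if j < nh n \<and> k < nh n \<and> j + k = a
      then complex_of_real (1 / sqrt (real (wt n a))) else 0)"

definition hankel :: "nat \<Rightarrow> (nat \<Rightarrow> complex) \<Rightarrow> nat \<Rightarrow> nat \<Rightarrow> complex" where
  "hankel n x j k = (\<Sum>a<n. x a * Gbasis n a j k)"

definition dft :: "nat \<Rightarrow> nat \<Rightarrow> nat \<Rightarrow> complex" where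
  "dft d j k = cis (- 2 * pi * real (j * k) / real d) / complex_of_real (sqrt (real d))"

definition Ghat :: "nat \<Rightarrow> nat \<Rightarrow> (nat \<Rightarrow> nat \<Rightarrow> complex) \<Rightarrow> nat \<Rightarrow> nat \<Rightarrow> nat \<Rightarrow> complex" where
  "Ghat d n X i j k = hankel n (\<lambda>a. \<Sum>l<d. dft d i l * X l a) j k"

definition binner :: "nat \<Rightarrow> nat \<Rightarrow> (nat \<Rightarrow> nat \<Rightarrow> nat \<Rightarrow> complex) \<Rightarrow> (nat \<Rightarrow> nat \<Rightarrow> nat \<Rightarrow> complex) \<Rightarrow> complex" where
  "binner d n A B = (\<Sum>i<d. \<Sum>j<nh n. \<Sum>k<nh n. A i j k * cnj (B i j k))"

text \<open>Adjoint of Ghat w.r.t. tr(A B^H) (applied to block diagonal matrices), written out: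
  binner (Ghat X) W = sum over l<d, a<n of X l a * cnj (Ghat_adj W l a).\<close>
definition Ghat_adj :: "nat \<Rightarrow> nat \<Rightarrow> (nat \<Rightarrow> nat \<Rightarrow> nat \<Rightarrow> complex) \<Rightarrow> nat \<Rightarrow> nat \<Rightarrow> complex" where
  "Ghat_adj d n W l a = (\<Sum>i<d. \<Sum>j<nh n. \<Sum>k<nh n.
      cnj (dft d i l) * cnj (Gbasis n a j k) * W i j k)"

definition Ghat_basis :: "nat \<Rightarrow> nat \<Rightarrow> nat \<Rightarrow> nat \<Rightarrow> nat \<Rightarrow> nat \<Rightarrow> nat \<Rightarrow> complex" where
  "Ghat_basis d n j k = Ghat d n (\<lambda>l a. if l = j \<and> a = k then 1 else 0)"

definition normGF :: "nat \<Rightarrow> nat \<Rightarrow> (nat \<Rightarrow> nat \<Rightarrow> nat \<Rightarrow> complex) \<Rightarrow> real" where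
  "normGF d n Z = sqrt (\<Sum>j<d. \<Sum>k<n.
      (cmod (binner d n Z (Ghat_basis d n j k)))\<^sup>2 / (real d * real (wt n k)))"

definition normGinf :: "nat \<Rightarrow> nat \<Rightarrow> (nat \<Rightarrow> nat \<Rightarrow> nat \<Rightarrow> complex) \<Rightarrow> real" where
  "normGinf d n Z = Max ((\<lambda>(j, k). cmod (binner d n Z (Ghat_basis d n j k))
      / sqrt (real d * real (wt n k))) ` ({..<d} \<times> {..<n}))"

definition P_Omega :: "(nat \<times> nat) set \<Rightarrow> (nat \<Rightarrow> nat \<Rightarrow> complex) \<Rightarrow> nat \<Rightarrow> nat \<Rightarrow> complex" where
  "P_Omega \<Omega> X l a = (if (l, a) \<in> \<Omega> then X l a else 0)"

text \<open>Blockwise projection onto the tangent space; U i, V i are the n1 x r and n2 x r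
  singular vector matrices of the i-th block.\<close>
definition P_T :: "nat \<Rightarrow> nat \<Rightarrow> (nat \<Rightarrow> nat \<Rightarrow> nat \<Rightarrow> complex) \<Rightarrow> (nat \<Rightarrow> nat \<Rightarrow> nat \<Rightarrow> complex)
    \<Rightarrow> (nat \<Rightarrow> nat \<Rightarrow> nat \<Rightarrow> complex) \<Rightarrow> nat \<Rightarrow> nat \<Rightarrow> nat \<Rightarrow> complex" where
  "P_T n r U V W i j k =
     (let PU = (\<lambda>j j'. \<Sum>s<r. U i j s * cnj (U i j' s));
          PV = (\<lambda>k' k. \<Sum>s<r. V i k' s * cnj (V i k s))
      in (\<Sum>j'<nh n. PU j j' * W i j' k) + (\<Sum>k'<nh n. W i j k' * PV k' k)
         - (\<Sum>j'<nh n. \<Sum>k'<nh n. PU j j' * W i j' k' * PV k' k))"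

definition compact_svd :: "nat \<Rightarrow> nat \<Rightarrow> nat \<Rightarrow> (nat \<Rightarrow> nat \<Rightarrow> nat \<Rightarrow> complex)
    \<Rightarrow> (nat \<Rightarrow> nat \<Rightarrow> nat \<Rightarrow> complex) \<Rightarrow> (nat \<Rightarrow> nat \<Rightarrow> real) \<Rightarrow> (nat \<Rightarrow> nat \<Rightarrow> nat \<Rightarrow> complex) \<Rightarrow> bool" where
  "compact_svd d n r Zn U \<sigma> V \<longleftrightarrow>
     (\<forall>i<d. \<forall>s<r. \<forall>t<r. (\<Sum>j<nh n. cnj (U i j s) * U i j t) = (if s = t then 1 else 0)) \<and>
     (\<forall>i<d. \<forall>s<r. \<forall>t<r. (\<Sum>k<nh n. cnj (V i k s) * V i k t) = (if s = t then 1 else 0)) \<and>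
     (\<forall>i<d. \<forall>s<r. \<sigma> i s > 0) \<and>
     (\<forall>i<d. \<forall>j<nh n. \<forall>k<nh n.
        Zn i j k = (\<Sum>s<r. U i j s * complex_of_real (\<sigma> i s) * cnj (V i k s)))"

definition avg_incoherent :: "nat \<Rightarrow> nat \<Rightarrow> nat \<Rightarrow> real \<Rightarrow> (nat \<Rightarrow> nat \<Rightarrow> nat \<Rightarrow> complex)
    \<Rightarrow> (nat \<Rightarrow> nat \<Rightarrow> nat \<Rightarrow> complex) \<Rightarrow> bool" where
  "avg_incoherent d n r \<mu>0 U V \<longleftrightarrow>
     (\<forall>j<nh n. (1 / real d) * (\<Sum>i<d. \<Sum>s<r. (cmod (U i j s))\<^sup>2) \<le> \<mu>0 * real r / real n) \<and>
     (\<forall>k<nh n. (1 / real d) * (\<Sum>i<d. \<Sum>s<r. (cmod (V i k s))\<^sup>2) \<le> \<mu>0 * real r / real n)"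

definition bernoulli_prob :: "nat \<Rightarrow> nat \<Rightarrow> real \<Rightarrow> ((nat \<times> nat) set \<Rightarrow> bool) \<Rightarrow> real" where
  "bernoulli_prob d n p E = (\<Sum>\<Omega>\<in>Pow ({..<d} \<times> {..<n}).
      if E \<Omega> then p ^ card \<Omega> * (1 - p) ^ (d * n - card \<Omega>) else 0)"

definition deviation :: "nat \<Rightarrow> nat \<Rightarrow> nat \<Rightarrow> real \<Rightarrow> (nat \<times> nat) set
    \<Rightarrow> (nat \<Rightarrow> nat \<Rightarrow> nat \<Rightarrow> complex) \<Rightarrow> (nat \<Rightarrow> nat \<Rightarrow> nat \<Rightarrow> complex)
    \<Rightarrow> (nat \<Rightarrow> nat \<Rightarrow> nat \<Rightarrow> complex) \<Rightarrow> nat \<Rightarrow> nat \<Rightarrow> nat \<Rightarrow> complex" where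
  "deviation d n r p \<Omega> U V Z i j k =
     complex_of_real (1 / p) * P_T n r U V (Ghat d n (P_Omega \<Omega> (Ghat_adj d n Z))) i j k
     - P_T n r U V (Ghat d n (Ghat_adj d n Z)) i j k"

end

theory Submission
  imports Defs
begin

text \<open>Write \<open>E\<close> for the deviation operator. The normalised coefficient
  \<open>\<langle>E Z, \<widehat>G\<^sub>j\<^sub>,\<^sub>k\<rangle> / sqrt (d w\<^sub>k)\<close> is a sum \<open>\<Sum>\<^sub>q (\<delta>\<^sub>q / p - 1) c\<^sub>q\<close> of independent
  centred Bernoulli terms over \<open>q = (l, a) \<in> [d] \<times> [n]\<close>, where \<open>c\<^sub>q\<close> is the normalised coefficient
  of \<open>Z\<close> at \<open>q\<close> times \<open>\<langle>P\<^sub>T \<widehat>G\<^sub>q, \<widehat>G\<^sub>j\<^sub>,\<^sub>k\<rangle> sqrt (w\<^sub>a / w\<^sub>k)\<close>. Since \<open>|F\<^sub>i\<^sub>l|\<^sup>2 = 1/d\<close>, this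
  coupling only involves leverage scores averaged over the \<open>d\<close> blocks, and the one-nonzero-per-row
  structure of the Hankel basis (Schur's test) bounds it by \<open>3 \<mu>\<^sub>0 r / n\<close>. Hence
  \<open>|c\<^sub>q| \<le> 3 \<mu>\<^sub>0 r / n \<parallel>Z\<parallel>\<^sub>\<infinity>\<close> and \<open>\<Sum>\<^sub>q |c\<^sub>q|\<^sup>2 \<le> (3 \<mu>\<^sub>0 r / n)\<^sup>2 \<parallel>Z\<parallel>\<^sub>F\<^sup>2\<close>. Bernstein's
  inequality for the real and imaginary parts with \<open>\<lambda> = 2 log (d n)\<close> and a union bound over the
  \<open>d n\<close> coefficients give the claim with \<open>C = 24\<close> and failure probability \<open>4 / (d n)\<close>.\<close>

section \<open>Bernoulli sampling and Bernstein's inequality\<close>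

lemma exp_le_quadratic:
  fixes y :: real
  assumes "\<bar>y\<bar> \<le> 1"
  shows "exp y \<le> 1 + y + y\<^sup>2"
proof (cases "y \<ge> 0")
  case True
  then show ?thesis using exp_bound[of y] assms by auto
next
  case False
  have "exp y \<le> 1 / (1 - y)"
    using exp_ge_add_one_self[of "-y"] False by (simp add: exp_minus field_simps)
  also have "\<dots> \<le> 1 + y + y\<^sup>2"
  proof -
    have "(1 - y) * (1 + y + y\<^sup>2) = 1 - y * y\<^sup>2"
      by (simp add: algebra_simps power2_eq_square)
    moreover have "y * y\<^sup>2 \<le> 0" using False by (simp add: mult_nonpos_nonneg)
    ultimately show ?thesis using False by (simp add: field_simps)
  qed
  finally show ?thesis .
qed

lemma bernoulli_mgf_le:
  fixes p u :: real
  assumes "0 < p" "p \<le> 1" "\<bar>u\<bar> \<le> p"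
  shows "(1 - p) * exp (- u) + p * exp (u * (1 / p - 1)) \<le> exp (u\<^sup>2 / p)"
proof -
  have "0 \<le> 1 / p - 1" using assms by simp
  then have "\<bar>u * (1 / p - 1)\<bar> = \<bar>u\<bar> * (1 / p - 1)"
    by (simp only: abs_mult abs_of_nonneg)
  also have "\<dots> \<le> p * (1 / p - 1)"
    using assms by (intro mult_right_mono) (auto simp: field_simps)
  also have "\<dots> \<le> 1" using assms by (simp add: field_simps)
  finally have small: "\<bar>u * (1 / p - 1)\<bar> \<le> 1" .
  have "(1 - p) * exp (- u) + p * exp (u * (1 / p - 1))
      \<le> (1 - p) * (1 - u + u\<^sup>2) + p * (1 + u * (1 / p - 1) + (u * (1 / p - 1))\<^sup>2)"
    using assms exp_le_quadratic[of "- u"] exp_le_quadratic[OF small]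
    by (intro add_mono mult_left_mono) auto
  also have "\<dots> = 1 + u\<^sup>2 * (1 - p) / p"
    using assms by (simp add: field_simps power2_eq_square)
  also have "\<dots> \<le> 1 + u\<^sup>2 / p"
    using assms by (intro add_left_mono divide_right_mono) (auto simp: mult_left_le)
  also have "\<dots> \<le> exp (u\<^sup>2 / p)" by (rule exp_ge_add_one_self)
  finally show ?thesis .
qed

definition bern_weight :: "'a set \<Rightarrow> real \<Rightarrow> 'a set \<Rightarrow> real" where
  "bern_weight S p \<Omega> = p ^ card \<Omega> * (1 - p) ^ (card S - card \<Omega>)"

definition bern_prob :: "'a set \<Rightarrow> real \<Rightarrow> ('a set \<Rightarrow> bool) \<Rightarrow> real" where
  "bern_prob S p E = (\<Sum>\<Omega>\<in>Pow S. if E \<Omega> then bern_weight S p \<Omega> else 0)"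

lemma bernoulli_prob_eq_bern_prob: "bernoulli_prob d n p E = bern_prob ({..<d} \<times> {..<n}) p E"
proof -
  have "card ({..<d} \<times> {..<n}) = d * n" by (simp add: card_cartesian_product)
  then show ?thesis unfolding bernoulli_prob_def bern_prob_def bern_weight_def by (rule ssubst) (rule refl)
qed

lemma bern_weight_nonneg: "0 \<le> p \<Longrightarrow> p \<le> 1 \<Longrightarrow> 0 \<le> bern_weight S p \<Omega>"
  by (simp add: bern_weight_def)

lemma bern_expectation_prod:
  assumes "finite S"
  shows "(\<Sum>\<Omega>\<in>Pow S. bern_weight S p \<Omega> * (\<Prod>x\<in>S. h x (x \<in> \<Omega>)))
       = (\<Prod>x\<in>S. (1 - p) * h x False + p * h x True)"
proof -
  have "bern_weight S p \<Omega> * (\<Prod>x\<in>S. h x (x \<in> \<Omega>))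
      = (\<Prod>x\<in>\<Omega>. p * h x True) * (\<Prod>x\<in>S - \<Omega>. (1 - p) * h x False)" if "\<Omega> \<subseteq> S" for \<Omega>
  proof -
    have "(\<Prod>x\<in>S. h x (x \<in> \<Omega>)) = (\<Prod>x\<in>S - \<Omega>. h x False) * (\<Prod>x\<in>\<Omega>. h x True)"
      unfolding prod.subset_diff[OF that assms] by (intro arg_cong2[where f="(*)"] prod.cong) auto
    moreover have "card (S - \<Omega>) = card S - card \<Omega>"
      using that assms by (meson card_Diff_subset finite_subset)
    ultimately show ?thesis
      using that assms finite_subset by (fastforce simp: bern_weight_def prod.distrib)
  qed
  then show ?thesis
    by (simp add: prod_add[OF assms] add.commute)
qed

lemma sum_bern_weight: "finite S \<Longrightarrow> (\<Sum>\<Omega>\<in>Pow S. bern_weight S p \<Omega>) = 1"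
  using bern_expectation_prod[of S p "\<lambda>_ _. 1"] by simp

lemma bern_prob_compl:
  assumes "finite S"
  shows "bern_prob S p (\<lambda>\<Omega>. \<not> E \<Omega>) = 1 - bern_prob S p E"
proof -
  have "bern_prob S p (\<lambda>\<Omega>. \<not> E \<Omega>) + bern_prob S p E = (\<Sum>\<Omega>\<in>Pow S. bern_weight S p \<Omega>)"
    unfolding bern_prob_def sum.distrib[symmetric] by (rule sum.cong) auto
  then show ?thesis using sum_bern_weight[OF assms] by simp
qed

lemma bern_prob_mono:
  assumes "0 \<le> p" "p \<le> 1" "\<And>\<Omega>. \<Omega> \<subseteq> S \<Longrightarrow> E \<Omega> \<Longrightarrow> F \<Omega>"
  shows "bern_prob S p E \<le> bern_prob S p F"
  unfolding bern_prob_def using assms by (intro sum_mono) (auto simp: bern_weight_nonneg)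

lemma bern_prob_disj_le:
  assumes "0 \<le> p" "p \<le> 1"
  shows "bern_prob S p (\<lambda>\<Omega>. E \<Omega> \<or> F \<Omega>) \<le> bern_prob S p E + bern_prob S p F"
  unfolding bern_prob_def sum.distrib[symmetric]
  using assms by (intro sum_mono) (auto simp: bern_weight_nonneg)

lemma bern_prob_bex_le:
  assumes "finite Y" "0 \<le> p" "p \<le> 1"
  shows "bern_prob S p (\<lambda>\<Omega>. \<exists>y\<in>Y. E y \<Omega>) \<le> (\<Sum>y\<in>Y. bern_prob S p (E y))"
  using assms(1)
proof (induction Y rule: finite_induct)
  case empty
  then show ?case by (simp add: bern_prob_def)
next
  case (insert y Y)
  have "bern_prob S p (\<lambda>\<Omega>. \<exists>z\<in>insert y Y. E z \<Omega>)
      \<le> bern_prob S p (E y) + bern_prob S p (\<lambda>\<Omega>. \<exists>z\<in>Y. E z \<Omega>)"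
    using bern_prob_disj_le[OF assms(2,3)] by simp
  then show ?case using insert by simp
qed

lemma bern_prob_le_expectation:
  assumes "0 \<le> p" "p \<le> 1" "\<And>\<Omega>. \<Omega> \<subseteq> S \<Longrightarrow> 0 \<le> f \<Omega>"
    and "\<And>\<Omega>. \<Omega> \<subseteq> S \<Longrightarrow> E \<Omega> \<Longrightarrow> 1 \<le> f \<Omega>"
  shows "bern_prob S p E \<le> (\<Sum>\<Omega>\<in>Pow S. bern_weight S p \<Omega> * f \<Omega>)"
  unfolding bern_prob_def
proof (intro sum_mono)
  fix \<Omega> assume "\<Omega> \<in> Pow S"
  then show "(if E \<Omega> then bern_weight S p \<Omega> else 0) \<le> bern_weight S p \<Omega> * f \<Omega>"
    using assms bern_weight_nonneg[OF assms(1,2), of S \<Omega>]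
    by (auto intro: mult_nonneg_nonneg simp: mult_le_cancel_left1)
qed

text \<open>Each summand is centred: \<open>x \<in> \<Omega>\<close> has probability \<open>p\<close> under \<open>bern_weight\<close>.\<close>
definition bern_dev :: "'a set \<Rightarrow> real \<Rightarrow> ('a \<Rightarrow> 'b::real_vector) \<Rightarrow> 'a set \<Rightarrow> 'b" where
  "bern_dev S p b \<Omega> = (\<Sum>x\<in>S. ((if x \<in> \<Omega> then 1 else 0) / p - 1) *\<^sub>R b x)"

lemma bern_dev_uminus: "bern_dev S p (\<lambda>x. - b x) \<Omega> = - bern_dev S p b \<Omega>"
  by (simp add: bern_dev_def sum_negf)

lemma Re_bern_dev: "Re (bern_dev S p c \<Omega>) = bern_dev S p (\<lambda>x. Re (c x)) \<Omega>"
  and Im_bern_dev: "Im (bern_dev S p c \<Omega>) = bern_dev S p (\<lambda>x. Im (c x)) \<Omega>"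
  by (simp_all add: bern_dev_def)

lemma bern_dev_mgf_le:
  assumes "finite S" "0 < p" "p \<le> 1" "0 \<le> t" "\<And>x. x \<in> S \<Longrightarrow> t * \<bar>b x\<bar> \<le> p"
  shows "(\<Sum>\<Omega>\<in>Pow S. bern_weight S p \<Omega> * exp (t * bern_dev S p b \<Omega>))
       \<le> exp (t\<^sup>2 * (\<Sum>x\<in>S. (b x)\<^sup>2) / p)"
proof -
  let ?h = "\<lambda>x \<beta>. exp (t * (((if \<beta> then 1 else 0) / p - 1) * b x))"
  have "exp (t * bern_dev S p b \<Omega>) = (\<Prod>x\<in>S. ?h x (x \<in> \<Omega>))" for \<Omega>
    unfolding bern_dev_def sum_distrib_left using assms(1) by (simp add: exp_sum)
  then have "(\<Sum>\<Omega>\<in>Pow S. bern_weight S p \<Omega> * exp (t * bern_dev S p b \<Omega>))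
      = (\<Prod>x\<in>S. (1 - p) * ?h x False + p * ?h x True)"
    using bern_expectation_prod[OF assms(1), of p ?h] by simp
  also have "\<dots> \<le> (\<Prod>x\<in>S. exp ((t * b x)\<^sup>2 / p))"
  proof (intro prod_mono conjI)
    fix x assume "x \<in> S"
    then have "\<bar>t * b x\<bar> \<le> p" using assms(4,5) by (simp add: abs_mult)
    from bernoulli_mgf_le[OF assms(2,3) this]
    show "(1 - p) * ?h x False + p * ?h x True \<le> exp ((t * b x)\<^sup>2 / p)"
      by (simp add: algebra_simps)
    show "0 \<le> (1 - p) * ?h x False + p * ?h x True"
      using assms by (intro add_nonneg_nonneg mult_nonneg_nonneg) auto
  qed
  also have "\<dots> = exp (t\<^sup>2 * (\<Sum>x\<in>S. (b x)\<^sup>2) / p)"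
    using assms(1)
    by (simp add: exp_sum[symmetric] sum_divide_distrib sum_distrib_left power_mult_distrib)
  finally show ?thesis .
qed

lemma bernstein_exponent:
  fixes p s2 B l :: real
  assumes "0 < p" "0 < s2" "0 < B" "0 \<le> l"
  obtains t where "0 \<le> t" "t * B \<le> p"
    "t\<^sup>2 * s2 / p - t * (2 * sqrt (l * s2 / p) + 2 * l * B / p) \<le> - l"
proof -
  let ?t = "min (sqrt (l * p / s2)) (p / B)"
  have "?t\<^sup>2 * s2 / p \<le> l"
  proof -
    have "?t\<^sup>2 \<le> (sqrt (l * p / s2))\<^sup>2" using assms by (intro power_mono) auto
    then show ?thesis using assms by (simp add: field_simps)
  qed
  moreover have "2 * l \<le> ?t * (2 * sqrt (l * s2 / p) + 2 * l * B / p)"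
  proof (cases "sqrt (l * p / s2) \<le> p / B")
    case True
    have "sqrt (l * p / s2) * sqrt (l * s2 / p) = sqrt (l\<^sup>2)"
      using assms by (simp add: real_sqrt_mult[symmetric] field_simps power2_eq_square)
    then have "sqrt (l * p / s2) * (2 * sqrt (l * s2 / p)) = 2 * l"
      using assms by (simp add: mult.left_commute)
    moreover have "0 \<le> sqrt (l * p / s2) * (2 * l * B / p)" using assms by simp
    ultimately show ?thesis using True by (simp add: distrib_left)
  next
    case False
    then show ?thesis using assms by (simp add: distrib_left)
  qed
  moreover have "0 \<le> ?t" "?t * B \<le> p" using assms by (auto simp: min_def field_simps)
  ultimately show ?thesis by (intro that[of ?t]) auto
qed

lemma bern_dev_upper_tail:
  assumes S: "finite S" and p: "0 < p" "p \<le> 1" and B: "0 \<le> B" "\<And>x. x \<in> S \<Longrightarrow> \<bar>b x\<bar> \<le> B"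
    and l: "0 \<le> l"
  shows "bern_prob S p (\<lambda>\<Omega>. bern_dev S p b \<Omega> > 2 * sqrt (l * (\<Sum>x\<in>S. (b x)\<^sup>2) / p) + 2 * l * B / p)
       \<le> exp (- l)"
proof (cases "\<forall>x\<in>S. b x = 0")
  case True
  moreover have "0 \<le> 2 * l * B / p" using B p l by simp
  ultimately show ?thesis by (simp add: bern_dev_def bern_prob_def not_less)
next
  case False
  define s2 where "s2 = (\<Sum>x\<in>S. (b x)\<^sup>2)"
  define thr where "thr = 2 * sqrt (l * s2 / p) + 2 * l * B / p"
  obtain x where x: "x \<in> S" "b x \<noteq> 0" using False by blast
  have "0 < s2" unfolding s2_def using x by (intro sum_pos2[OF S x(1)]) auto
  moreover have "0 < B" using False B by force
  ultimately obtain t where t: "0 \<le> t" "t * B \<le> p" "t\<^sup>2 * s2 / p - t * thr \<le> - l"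
    using bernstein_exponent[OF p(1) _ _ l] unfolding thr_def by blast
  have "bern_prob S p (\<lambda>\<Omega>. bern_dev S p b \<Omega> > thr)
      \<le> (\<Sum>\<Omega>\<in>Pow S. bern_weight S p \<Omega> * (exp (t * bern_dev S p b \<Omega>) * exp (- t * thr)))"
  proof (rule bern_prob_le_expectation)
    fix \<Omega> assume "bern_dev S p b \<Omega> > thr"
    then have "0 \<le> t * bern_dev S p b \<Omega> + - t * thr"
      using t(1) by (simp add: algebra_simps mult_left_mono)
    then show "1 \<le> exp (t * bern_dev S p b \<Omega>) * exp (- t * thr)"
      by (simp add: exp_add[symmetric])
  qed (use p in auto)
  also have "\<dots> = (\<Sum>\<Omega>\<in>Pow S. bern_weight S p \<Omega> * exp (t * bern_dev S p b \<Omega>)) * exp (- t * thr)"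
    by (simp add: sum_distrib_right mult.assoc)
  also have "\<dots> \<le> exp (t\<^sup>2 * s2 / p) * exp (- t * thr)"
    unfolding s2_def using t B
    by (intro mult_right_mono bern_dev_mgf_le[OF S p t(1)])
       (auto intro: order.trans[OF mult_left_mono t(2)])
  also have "\<dots> \<le> exp (- l)" using t(3) by (simp add: exp_add[symmetric])
  finally show ?thesis unfolding thr_def s2_def .
qed

lemma bern_dev_abs_tail:
  assumes S: "finite S" and p: "0 < p" "p \<le> 1" and B: "0 \<le> B" "\<And>x. x \<in> S \<Longrightarrow> \<bar>b x\<bar> \<le> B"
    and s2: "(\<Sum>x\<in>S. (b x)\<^sup>2) \<le> s2" and l: "0 \<le> l"
  shows "bern_prob S p (\<lambda>\<Omega>. \<bar>bern_dev S p b \<Omega>\<bar> > 2 * sqrt (l * s2 / p) + 2 * l * B / p)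
       \<le> 2 * exp (- l)"
proof -
  let ?thr = "2 * sqrt (l * (\<Sum>x\<in>S. (b x)\<^sup>2) / p) + 2 * l * B / p"
  have thr_le: "?thr \<le> 2 * sqrt (l * s2 / p) + 2 * l * B / p"
    using s2 l p by (simp add: divide_right_mono mult_left_mono)
  have "bern_prob S p (\<lambda>\<Omega>. \<bar>bern_dev S p b \<Omega>\<bar> > 2 * sqrt (l * s2 / p) + 2 * l * B / p)
      \<le> bern_prob S p (\<lambda>\<Omega>. bern_dev S p b \<Omega> > ?thr \<or> bern_dev S p (\<lambda>x. - b x) \<Omega> > ?thr)"
    unfolding bern_dev_uminus using p thr_le by (intro bern_prob_mono) arith+
  also have "\<dots> \<le> exp (- l) + exp (- l)"
    using bern_dev_upper_tail[OF S p B l] bern_dev_upper_tail[OF S p B(1) _ l, of "\<lambda>x. - b x"] B(2)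
    by (intro order.trans[OF bern_prob_disj_le] add_mono) (use p in auto)
  finally show ?thesis by simp
qed

lemma bern_dev_cmod_tail:
  fixes c :: "'a \<Rightarrow> complex"
  assumes S: "finite S" and p: "0 < p" "p \<le> 1" and B: "0 \<le> B" "\<And>x. x \<in> S \<Longrightarrow> cmod (c x) \<le> B"
    and s2: "(\<Sum>x\<in>S. (cmod (c x))\<^sup>2) \<le> s2" and l: "0 \<le> l"
  shows "bern_prob S p (\<lambda>\<Omega>. cmod (bern_dev S p c \<Omega>) > 4 * sqrt (l * s2 / p) + 4 * l * B / p)
       \<le> 4 * exp (- l)"
proof -
  let ?thr = "2 * sqrt (l * s2 / p) + 2 * l * B / p"
  have part_le: "\<bar>f (c x)\<bar> \<le> B" if "x \<in> S" "\<And>z. \<bar>f z\<bar> \<le> cmod z" for f :: "complex \<Rightarrow> real" and x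
    using that B(2)[of x] by (meson order_trans)
  have part_sq: "(\<Sum>x\<in>S. (f (c x))\<^sup>2) \<le> s2" if "\<And>z. \<bar>f z\<bar> \<le> cmod z" for f :: "complex \<Rightarrow> real"
  proof -
    have "(\<Sum>x\<in>S. (f (c x))\<^sup>2) \<le> (\<Sum>x\<in>S. (cmod (c x))\<^sup>2)"
      using that by (intro sum_mono) (metis abs_ge_zero power2_abs power_mono)
    then show ?thesis using s2 by linarith
  qed
  have "bern_prob S p (\<lambda>\<Omega>. cmod (bern_dev S p c \<Omega>) > 4 * sqrt (l * s2 / p) + 4 * l * B / p)
      \<le> bern_prob S p (\<lambda>\<Omega>. \<bar>Re (bern_dev S p c \<Omega>)\<bar> > ?thr \<or> \<bar>Im (bern_dev S p c \<Omega>)\<bar> > ?thr)"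
  proof (rule bern_prob_mono)
    fix \<Omega> assume "cmod (bern_dev S p c \<Omega>) > 4 * sqrt (l * s2 / p) + 4 * l * B / p"
    then show "\<bar>Re (bern_dev S p c \<Omega>)\<bar> > ?thr \<or> \<bar>Im (bern_dev S p c \<Omega>)\<bar> > ?thr"
      using cmod_le[of "bern_dev S p c \<Omega>"] by linarith
  qed (use p in auto)
  also have "\<dots> \<le> 2 * exp (- l) + 2 * exp (- l)"
    unfolding Re_bern_dev Im_bern_dev
    by (intro order.trans[OF bern_prob_disj_le] add_mono bern_dev_abs_tail[OF S p B(1) _ _ l])
       (use p abs_Re_le_cmod abs_Im_le_cmod in \<open>auto intro: part_le part_sq\<close>)
  finally show ?thesis by simp
qed

lemma bern_prob_all_cmod_dev_le:
  fixes c :: "'j \<Rightarrow> 'a \<Rightarrow> complex"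
  assumes S: "finite S" and J: "finite J" and p: "0 < p" "p \<le> 1" and B: "0 \<le> B"
    and c_le: "\<And>j x. j \<in> J \<Longrightarrow> x \<in> S \<Longrightarrow> cmod (c j x) \<le> B"
    and c_sq: "\<And>j. j \<in> J \<Longrightarrow> (\<Sum>x\<in>S. (cmod (c j x))\<^sup>2) \<le> s2" and l: "0 \<le> l"
  shows "bern_prob S p (\<lambda>\<Omega>. \<forall>j\<in>J. cmod (bern_dev S p (c j) \<Omega>) \<le> 4 * sqrt (l * s2 / p) + 4 * l * B / p)
       \<ge> 1 - 4 * real (card J) * exp (- l)"
proof -
  have "bern_prob S p (\<lambda>\<Omega>. \<exists>j\<in>J. cmod (bern_dev S p (c j) \<Omega>) > 4 * sqrt (l * s2 / p) + 4 * l * B / p)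
      \<le> (\<Sum>j\<in>J. 4 * exp (- l))"
    using p by (intro order.trans[OF bern_prob_bex_le[OF J]] sum_mono bern_dev_cmod_tail[OF S p B _ _ l]
      c_le c_sq) auto
  then show ?thesis
    using bern_prob_compl[OF S, of p
        "\<lambda>\<Omega>. \<exists>j\<in>J. cmod (bern_dev S p (c j) \<Omega>) > 4 * sqrt (l * s2 / p) + 4 * l * B / p"]
    by (simp add: not_less)
qed

section \<open>Leverage scores and the Hankel basis\<close>

definition orthonormal_cols :: "nat \<Rightarrow> nat \<Rightarrow> (nat \<Rightarrow> nat \<Rightarrow> complex) \<Rightarrow> bool" where
  "orthonormal_cols m r W \<longleftrightarrow>
     (\<forall>s<r. \<forall>t<r. (\<Sum>j<m. cnj (W j s) * W j t) = (if s = t then 1 else 0))"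

definition proj_ent :: "nat \<Rightarrow> (nat \<Rightarrow> nat \<Rightarrow> complex) \<Rightarrow> nat \<Rightarrow> nat \<Rightarrow> complex" where
  "proj_ent r W x y = (\<Sum>s<r. W x s * cnj (W y s))"

definition lev :: "nat \<Rightarrow> (nat \<Rightarrow> nat \<Rightarrow> complex) \<Rightarrow> nat \<Rightarrow> real" where
  "lev r W x = (\<Sum>s<r. (cmod (W x s))\<^sup>2)"

lemma lev_nonneg: "0 \<le> lev r W x"
  unfolding lev_def by (intro sum_nonneg) auto

lemma proj_ent_swap: "proj_ent r W y x = cnj (proj_ent r W x y)"
  unfolding proj_ent_def by (simp add: mult.commute)

lemma norm_proj_ent_le: "cmod (proj_ent r W x y) \<le> (lev r W x + lev r W y) / 2"
proof -
  have "cmod (proj_ent r W x y) \<le> (\<Sum>s<r. cmod (W x s) * cmod (W y s))"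
    unfolding proj_ent_def by (rule order.trans[OF norm_sum]) (simp add: norm_mult)
  also have "\<dots> \<le> (\<Sum>s<r. ((cmod (W x s))\<^sup>2 + (cmod (W y s))\<^sup>2) / 2)"
    by (intro sum_mono) (simp add: field_simps, metis mult.assoc sum_squares_bound)
  also have "\<dots> = (lev r W x + lev r W y) / 2"
    unfolding lev_def sum.distrib[symmetric] sum_divide_distrib[symmetric] by simp
  finally show ?thesis .
qed

lemma sum_norm_proj_ent_sq:
  assumes "orthonormal_cols m r W"
  shows "(\<Sum>y<m. (cmod (proj_ent r W x y))\<^sup>2) = lev r W x"
proof -
  have "complex_of_real (\<Sum>y<m. (cmod (proj_ent r W x y))\<^sup>2)
      = (\<Sum>y<m. proj_ent r W x y * cnj (proj_ent r W x y))"
    by (simp only: of_real_sum complex_norm_square)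
  also have "\<dots> = (\<Sum>s<r. \<Sum>t<r. W x s * cnj (W x t) * (\<Sum>y<m. cnj (W y s) * W y t))"
    unfolding proj_ent_def
    by (simp add: sum_distrib_left sum_distrib_right sum.swap[of _ "{..<m}"] mult_ac)
  also have "\<dots> = (\<Sum>s<r. \<Sum>t<r. W x s * cnj (W x t) * (if s = t then 1 else 0))"
    using assms unfolding orthonormal_cols_def by (intro sum.cong refl) auto
  also have "\<dots> = (\<Sum>s<r. W x s * cnj (W x s))"
    by (simp add: if_distrib cong: if_cong)
  also have "\<dots> = complex_of_real (lev r W x)"
    unfolding lev_def by (simp only: of_real_sum complex_norm_square)
  finally show ?thesis using of_real_eq_iff by blast
qed

lemma P_T_eq_proj_ent:
  "P_T n r U V W i x c = (\<Sum>y<nh n. proj_ent r (U i) x y * W i y c)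
     + (\<Sum>z<nh n. W i x z * proj_ent r (V i) z c)
     - (\<Sum>y<nh n. \<Sum>z<nh n. proj_ent r (U i) x y * W i y z * proj_ent r (V i) z c)"
  unfolding P_T_def Let_def proj_ent_def by simp

lemma P_T_scale: "P_T n r U V (\<lambda>i x c. f i * W i x c) i x c = f i * P_T n r U V W i x c"
  unfolding P_T_def Let_def by (simp add: sum_distrib_left algebra_simps)

lemma P_T_add:
  "P_T n r U V (\<lambda>i x c. A i x c + B i x c) i x c = P_T n r U V A i x c + P_T n r U V B i x c"
  unfolding P_T_def Let_def by (simp add: sum.distrib algebra_simps)

lemma P_T_sum:
  assumes "finite Q"
  shows "P_T n r U V (\<lambda>i x c. \<Sum>q\<in>Q. f q * W q i x c) i x c = (\<Sum>q\<in>Q. f q * P_T n r U V (W q) i x c)"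
  using assms
proof (induction Q rule: finite_induct)
  case empty
  then show ?case by (simp add: P_T_def)
next
  case (insert q Q)
  then show ?case by (simp add: P_T_add P_T_scale[where f="\<lambda>_. f q"])
qed

abbreviation gw :: "nat \<Rightarrow> nat \<Rightarrow> real" where
  "gw n a \<equiv> 1 / sqrt (real (wt n a))"

lemma norm_Gbasis: "cmod (Gbasis n a x c) = (if x < nh n \<and> c < nh n \<and> x + c = a then gw n a else 0)"
  unfolding Gbasis_def by (simp add: norm_divide)

lemma sum_norm_Gbasis_col_le: "(\<Sum>y<nh n. cmod (Gbasis n a y c)) \<le> gw n a"
proof -
  have "(\<Sum>y<nh n. cmod (Gbasis n a y c)) \<le> (\<Sum>y<nh n. if y = a - c then gw n a else 0)"
    unfolding norm_Gbasis by (intro sum_mono) auto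
  also have "\<dots> \<le> gw n a" by simp
  finally show ?thesis .
qed

lemma sum_norm_Gbasis_row_le: "(\<Sum>z<nh n. cmod (Gbasis n a x z)) \<le> gw n a"
proof -
  have "(\<Sum>z<nh n. cmod (Gbasis n a x z)) \<le> (\<Sum>z<nh n. if z = a - x then gw n a else 0)"
    unfolding norm_Gbasis by (intro sum_mono) auto
  also have "\<dots> \<le> gw n a" by simp
  finally show ?thesis .
qed

lemma sum_norm_Gbasis: "(\<Sum>x<nh n. \<Sum>c<nh n. cmod (Gbasis n k x c)) = gw n k * real (wt n k)"
proof -
  have "(\<Sum>x<nh n. \<Sum>c<nh n. cmod (Gbasis n k x c))
      = (\<Sum>xc\<in>{..<nh n} \<times> {..<nh n}. if fst xc + snd xc = k then gw n k else 0)"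
    unfolding norm_Gbasis sum.cartesian_product by (intro sum.cong) auto
  also have "\<dots> = (\<Sum>xc\<in>({..<nh n} \<times> {..<nh n}) \<inter> {xc. fst xc + snd xc = k}. gw n k)"
    by (simp add: sum.If_cases)
  also have "({..<nh n} \<times> {..<nh n}) \<inter> {xc. fst xc + snd xc = k}
      = {(j, k'). j < nh n \<and> k' < nh n \<and> j + k' = k}"
    by auto
  finally show ?thesis unfolding wt_def by simp
qed

lemma wt_pos:
  assumes "odd n" "a < n"
  shows "1 \<le> wt n a"
proof -
  define j where "j = (if a < nh n then a else nh n - 1)"
  have "n = 2 * nh n - 1" using assms unfolding nh_def by (auto elim!: oddE)
  then have "(j, a - j) \<in> {(j, k). j < nh n \<and> k < nh n \<and> j + k = a}"
    using assms unfolding j_def by auto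
  moreover have "finite {(j, k). j < nh n \<and> k < nh n \<and> j + k = a}"
    by (rule finite_subset[of _ "{..<nh n} \<times> {..<nh n}"]) auto
  ultimately have "card {(j, k). j < nh n \<and> k < nh n \<and> j + k = a} > 0"
    by (subst card_gt_0_iff) blast
  then show ?thesis unfolding wt_def by simp
qed

lemma bilinear_le_schur:
  fixes f h :: "nat \<Rightarrow> real" and G :: "nat \<Rightarrow> nat \<Rightarrow> real"
  assumes "\<And>y z. 0 \<le> G y z" "\<And>y. (\<Sum>z<m. G y z) \<le> g" "\<And>z. (\<Sum>y<m. G y z) \<le> g"
  shows "(\<Sum>y<m. \<Sum>z<m. f y * G y z * h z) \<le> g * ((\<Sum>y<m. (f y)\<^sup>2) + (\<Sum>z<m. (h z)\<^sup>2)) / 2"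
proof -
  have "(\<Sum>y<m. \<Sum>z<m. f y * G y z * h z) \<le> (\<Sum>y<m. \<Sum>z<m. ((f y)\<^sup>2 + (h z)\<^sup>2) / 2 * G y z)"
  proof (intro sum_mono)
    fix y z
    have "f y * h z \<le> ((f y)\<^sup>2 + (h z)\<^sup>2) / 2"
      using sum_squares_bound[of "f y" "h z"] by simp
    from mult_left_mono[OF this assms(1)[of y z]]
    show "f y * G y z * h z \<le> ((f y)\<^sup>2 + (h z)\<^sup>2) / 2 * G y z" by (simp add: mult_ac)
  qed
  also have "\<dots> = ((\<Sum>y<m. \<Sum>z<m. (f y)\<^sup>2 * G y z) + (\<Sum>y<m. \<Sum>z<m. (h z)\<^sup>2 * G y z)) / 2"
    by (simp add: sum.distrib sum_divide_distrib[symmetric] algebra_simps)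
  also have "\<dots> = ((\<Sum>y<m. (f y)\<^sup>2 * (\<Sum>z<m. G y z)) + (\<Sum>z<m. (h z)\<^sup>2 * (\<Sum>y<m. G y z))) / 2"
    by (subst (2) sum.swap) (simp add: sum_distrib_left)
  also have "\<dots> \<le> ((\<Sum>y<m. (f y)\<^sup>2 * g) + (\<Sum>z<m. (h z)\<^sup>2 * g)) / 2"
    using assms by (intro divide_right_mono add_mono sum_mono mult_left_mono) auto
  also have "\<dots> = g * ((\<Sum>y<m. (f y)\<^sup>2) + (\<Sum>z<m. (h z)\<^sup>2)) / 2"
    by (simp add: sum_distrib_left algebra_simps)
  finally show ?thesis .
qed

lemma norm_P_T_Gbasis_le:
  assumes "orthonormal_cols (nh n) r (U i)" "orthonormal_cols (nh n) r (V i)"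
  shows "cmod (P_T n r U V (\<lambda>_. Gbasis n a) i x c)
    \<le> (\<Sum>y<nh n. (lev r (U i) x + lev r (U i) y) / 2 * cmod (Gbasis n a y c))
     + (\<Sum>z<nh n. (lev r (V i) z + lev r (V i) c) / 2 * cmod (Gbasis n a x z))
     + (lev r (U i) x + lev r (V i) c) / 2 * gw n a"
proof -
  let ?m = "nh n" and ?PU = "proj_ent r (U i)" and ?PV = "proj_ent r (V i)"
  have 1: "cmod (\<Sum>y<?m. ?PU x y * Gbasis n a y c)
      \<le> (\<Sum>y<?m. (lev r (U i) x + lev r (U i) y) / 2 * cmod (Gbasis n a y c))"
    by (rule order.trans[OF norm_sum], intro sum_mono, unfold norm_mult)
       (rule mult_right_mono[OF norm_proj_ent_le norm_ge_zero])
  have 2: "cmod (\<Sum>z<?m. Gbasis n a x z * ?PV z c)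
      \<le> (\<Sum>z<?m. (lev r (V i) z + lev r (V i) c) / 2 * cmod (Gbasis n a x z))"
    by (rule order.trans[OF norm_sum], intro sum_mono, unfold norm_mult mult.commute[of "cmod (Gbasis _ _ _ _)"])
       (rule mult_right_mono[OF norm_proj_ent_le norm_ge_zero])
  have "cmod (\<Sum>y<?m. \<Sum>z<?m. ?PU x y * Gbasis n a y z * ?PV z c)
      \<le> (\<Sum>y<?m. \<Sum>z<?m. cmod (?PU x y) * cmod (Gbasis n a y z) * cmod (?PV z c))"
    by (rule order.trans[OF norm_sum], intro sum_mono, rule order.trans[OF norm_sum])
       (simp add: norm_mult)
  also have "\<dots> \<le> gw n a * ((\<Sum>y<?m. (cmod (?PU x y))\<^sup>2) + (\<Sum>z<?m. (cmod (?PV z c))\<^sup>2)) / 2"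
    by (rule bilinear_le_schur) (auto intro: sum_norm_Gbasis_row_le sum_norm_Gbasis_col_le)
  also have "(\<Sum>z<?m. (cmod (?PV z c))\<^sup>2) = lev r (V i) c"
    using sum_norm_proj_ent_sq[OF assms(2)] by (simp add: proj_ent_swap[of r "V i" _ c])
  finally have 3: "cmod (\<Sum>y<?m. \<Sum>z<?m. ?PU x y * Gbasis n a y z * ?PV z c)
      \<le> (lev r (U i) x + lev r (V i) c) / 2 * gw n a"
    by (simp add: sum_norm_proj_ent_sq[OF assms(1)])
  show ?thesis unfolding P_T_eq_proj_ent
    by (rule order.trans[OF norm_triangle_ineq4], rule add_mono, rule order.trans[OF norm_triangle_ineq])
       (use 1 2 3 in auto)
qed

lemma sum_sum_mult_le:
  fixes f :: "'i \<Rightarrow> 'y \<Rightarrow> real" and w :: "'y \<Rightarrow> real"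
  assumes "\<And>y. y \<in> Y \<Longrightarrow> (\<Sum>i\<in>I. f i y) \<le> K" "\<And>y. y \<in> Y \<Longrightarrow> 0 \<le> w y"
  shows "(\<Sum>i\<in>I. \<Sum>y\<in>Y. f i y * w y) \<le> K * (\<Sum>y\<in>Y. w y)"
proof -
  have "(\<Sum>i\<in>I. \<Sum>y\<in>Y. f i y * w y) = (\<Sum>y\<in>Y. (\<Sum>i\<in>I. f i y) * w y)"
    by (simp add: sum.swap[of _ I] sum_distrib_right)
  also have "\<dots> \<le> (\<Sum>y\<in>Y. K * w y)"
    using assms by (intro sum_mono mult_right_mono) auto
  finally show ?thesis by (simp add: sum_distrib_left)
qed

lemma sum_midpoint_le:
  fixes a b :: "'i \<Rightarrow> real"
  assumes "(\<Sum>i\<in>I. a i) \<le> K" "(\<Sum>i\<in>I. b i) \<le> K"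
  shows "(\<Sum>i\<in>I. (a i + b i) / 2) \<le> K"
  using assms by (simp add: sum.distrib sum_divide_distrib[symmetric])

section \<open>Coefficients of the deviation\<close>

lemma Ghat_basis_eq:
  assumes "l < d" "a < n"
  shows "Ghat_basis d n l a = (\<lambda>i x c. dft d i l * Gbasis n a x c)"
proof (intro ext)
  fix i x c
  have "Ghat_basis d n l a i x c = (\<Sum>a'<n. (if a' = a then dft d i l else 0) * Gbasis n a' x c)"
    unfolding Ghat_basis_def Ghat_def hankel_def using assms
    by (intro sum.cong refl) (simp add: if_distrib[where f="\<lambda>z. _ * z"] cong: if_cong)
  also have "\<dots> = dft d i l * Gbasis n a x c"
    using assms by (simp add: if_distrib[where f="\<lambda>z. z * _"] cong: if_cong)
  finally show "Ghat_basis d n l a i x c = dft d i l * Gbasis n a x c" .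
qed

lemma norm_dft: "cmod (dft d i l) = 1 / sqrt (real d)"
  unfolding dft_def by (simp add: norm_divide)

lemma binner_sum:
  "binner d n (\<lambda>i x c. \<Sum>q\<in>Q. f q * B q i x c) W = (\<Sum>q\<in>Q. f q * binner d n (B q) W)"
  unfolding binner_def sum_distrib_right
  by (simp add: sum_distrib_left mult_ac sum.swap[of _ Q])

lemma Ghat_eq_sum_Ghat_basis:
  "Ghat d n Y = (\<lambda>i x c. \<Sum>q\<in>{..<d} \<times> {..<n}. Y (fst q) (snd q) * Ghat_basis d n (fst q) (snd q) i x c)"
proof (intro ext)
  fix i x c
  have "(\<Sum>q\<in>{..<d} \<times> {..<n}. Y (fst q) (snd q) * Ghat_basis d n (fst q) (snd q) i x c)
      = (\<Sum>l<d. \<Sum>a<n. Y l a * (dft d i l * Gbasis n a x c))"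
    unfolding sum.cartesian_product by (intro sum.cong refl) (auto simp: Ghat_basis_eq)
  also have "\<dots> = Ghat d n Y i x c"
    unfolding Ghat_def hankel_def sum_distrib_right
    by (subst sum.swap) (simp add: sum_distrib_right mult_ac)
  finally show "Ghat d n Y i x c = (\<Sum>q\<in>{..<d} \<times> {..<n}. Y (fst q) (snd q) * Ghat_basis d n (fst q) (snd q) i x c)"
    by simp
qed

lemma binner_deviation:
  "binner d n (deviation d n r p \<Omega> U V Z) W
   = (\<Sum>q\<in>{..<d} \<times> {..<n}. (complex_of_real ((if q \<in> \<Omega> then 1 else 0) / p - 1)
        * Ghat_adj d n Z (fst q) (snd q)) * binner d n (P_T n r U V (Ghat_basis d n (fst q) (snd q))) W)"
proof -
  let ?S = "{..<d} \<times> {..<n}" and ?X = "Ghat_adj d n Z"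
  let ?B = "\<lambda>q. P_T n r U V (Ghat_basis d n (fst q) (snd q))"
  have "deviation d n r p \<Omega> U V Z = (\<lambda>i x c. \<Sum>q\<in>?S.
      (complex_of_real ((if q \<in> \<Omega> then 1 else 0) / p - 1) * ?X (fst q) (snd q)) * ?B q i x c)"
  proof (intro ext)
    fix i x c
    have "deviation d n r p \<Omega> U V Z i x c
      = complex_of_real (1 / p) * (\<Sum>q\<in>?S. P_Omega \<Omega> ?X (fst q) (snd q) * ?B q i x c)
        - (\<Sum>q\<in>?S. ?X (fst q) (snd q) * ?B q i x c)"
      unfolding deviation_def Ghat_eq_sum_Ghat_basis by (simp add: P_T_sum)
    also have "\<dots> = (\<Sum>q\<in>?S.
        (complex_of_real ((if q \<in> \<Omega> then 1 else 0) / p - 1) * ?X (fst q) (snd q)) * ?B q i x c)"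
      unfolding sum_distrib_left sum_subtractf[symmetric]
      by (intro sum.cong refl) (auto simp: P_Omega_def algebra_simps)
    finally show "deviation d n r p \<Omega> U V Z i x c = (\<Sum>q\<in>?S.
        (complex_of_real ((if q \<in> \<Omega> then 1 else 0) / p - 1) * ?X (fst q) (snd q)) * ?B q i x c)" .
  qed
  then show ?thesis by (simp add: binner_sum)
qed

lemma binner_Ghat_basis_eq_Ghat_adj:
  assumes "l < d" "a < n"
  shows "binner d n Z (Ghat_basis d n l a) = Ghat_adj d n Z l a"
  unfolding binner_def Ghat_adj_def Ghat_basis_eq[OF assms] by (simp add: mult_ac Gbasis_def)

definition Gcoef :: "nat \<Rightarrow> nat \<Rightarrow> (nat \<Rightarrow> nat \<Rightarrow> nat \<Rightarrow> complex) \<Rightarrow> nat \<times> nat \<Rightarrow> complex" where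
  "Gcoef d n Z q = binner d n Z (Ghat_basis d n (fst q) (snd q))
     / complex_of_real (sqrt (real d * real (wt n (snd q))))"

lemma normGinf_eq_Max:
  "normGinf d n Z = Max ((\<lambda>q. cmod (Gcoef d n Z q)) ` ({..<d} \<times> {..<n}))"
  unfolding normGinf_def Gcoef_def by (simp add: norm_divide split_def)

lemma normGinf_ge: "q \<in> {..<d} \<times> {..<n} \<Longrightarrow> cmod (Gcoef d n Z q) \<le> normGinf d n Z"
  unfolding normGinf_eq_Max by (intro Max_ge) auto

lemma normGinf_le:
  assumes "1 \<le> d" "1 \<le> n" "\<And>q. q \<in> {..<d} \<times> {..<n} \<Longrightarrow> cmod (Gcoef d n Z q) \<le> R"
  shows "normGinf d n Z \<le> R"
  unfolding normGinf_eq_Max using assms by (subst Max_le_iff) (auto simp: lessThan_empty_iff)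

lemma normGinf_nonneg:
  assumes "1 \<le> d" "1 \<le> n"
  shows "0 \<le> normGinf d n Z"
proof -
  have "(0, 0) \<in> {..<d} \<times> {..<n}" using assms by auto
  then show ?thesis using normGinf_ge order_trans[OF norm_ge_zero] by blast
qed

lemma normGF_sq: "(normGF d n Z)\<^sup>2 = (\<Sum>q\<in>{..<d} \<times> {..<n}. (cmod (Gcoef d n Z q))\<^sup>2)"
  unfolding normGF_def Gcoef_def sum.cartesian_product
  by (simp add: sum_nonneg norm_divide power_divide split_def)

lemma normGF_nonneg: "0 \<le> normGF d n Z"
  unfolding normGF_def by (simp add: sum_nonneg)

text \<open>The factor \<open>sqrt (w\<^sub>a / w\<^sub>k)\<close> converts between the normalisations of
  \<open>Gcoef\<close> at \<open>q = (l, a)\<close> and at \<open>jk = (j, k)\<close>; see \<open>Gcoef_deviation\<close>.\<close>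
definition PT_coupling :: "nat \<Rightarrow> nat \<Rightarrow> nat \<Rightarrow> (nat \<Rightarrow> nat \<Rightarrow> nat \<Rightarrow> complex)
    \<Rightarrow> (nat \<Rightarrow> nat \<Rightarrow> nat \<Rightarrow> complex) \<Rightarrow> nat \<times> nat \<Rightarrow> nat \<times> nat \<Rightarrow> complex" where
  "PT_coupling d n r U V jk q =
     binner d n (P_T n r U V (Ghat_basis d n (fst q) (snd q))) (Ghat_basis d n (fst jk) (snd jk))
     * complex_of_real (sqrt (real (wt n (snd q))) / sqrt (real (wt n (snd jk))))"

text \<open>\<open>U i\<close>, \<open>V i\<close> are the singular vector frames of the blocks of \<open>\<widehat>Z\<^sup>\<natural>\<close>;
  the theorem takes \<open>M = \<mu>\<^sub>0 r / n\<close>.\<close>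
locale incoherent_tangent =
  fixes d n r :: nat and U V :: "nat \<Rightarrow> nat \<Rightarrow> nat \<Rightarrow> complex" and M :: real
  assumes d_pos: "1 \<le> d" and n_odd: "odd n"
    and orth_U: "\<And>i. i < d \<Longrightarrow> orthonormal_cols (nh n) r (U i)"
    and orth_V: "\<And>i. i < d \<Longrightarrow> orthonormal_cols (nh n) r (V i)"
    and sum_lev_U: "\<And>y. y < nh n \<Longrightarrow> (\<Sum>i<d. lev r (U i) y) \<le> real d * M"
    and sum_lev_V: "\<And>y. y < nh n \<Longrightarrow> (\<Sum>i<d. lev r (V i) y) \<le> real d * M"
begin

lemma M_nonneg: "0 \<le> M"
proof -
  have "0 < nh n" using n_odd unfolding nh_def by (auto elim: oddE)
  then have "0 \<le> real d * M"
    using sum_lev_U[of 0] sum_nonneg[of "{..<d}" "\<lambda>i. lev r (U i) 0"] lev_nonneg by force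
  then show ?thesis using d_pos by (simp add: zero_le_mult_iff)
qed

lemma sum_norm_P_T_Gbasis_le:
  assumes x: "x < nh n" and c: "c < nh n"
  shows "(\<Sum>i<d. cmod (P_T n r U V (\<lambda>_. Gbasis n a) i x c)) \<le> 3 * (real d * M) * gw n a"
proof -
  let ?K = "real d * M"
  have K: "0 \<le> ?K" using M_nonneg by simp
  have "(\<Sum>i<d. cmod (P_T n r U V (\<lambda>_. Gbasis n a) i x c))
      \<le> (\<Sum>i<d. (\<Sum>y<nh n. (lev r (U i) x + lev r (U i) y) / 2 * cmod (Gbasis n a y c))
        + (\<Sum>z<nh n. (lev r (V i) z + lev r (V i) c) / 2 * cmod (Gbasis n a x z))
        + (lev r (U i) x + lev r (V i) c) / 2 * gw n a)"
    by (rule sum_mono, rule norm_P_T_Gbasis_le) (auto intro: orth_U orth_V)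
  also have "\<dots> = (\<Sum>i<d. \<Sum>y<nh n. (lev r (U i) x + lev r (U i) y) / 2 * cmod (Gbasis n a y c))
        + (\<Sum>i<d. \<Sum>z<nh n. (lev r (V i) z + lev r (V i) c) / 2 * cmod (Gbasis n a x z))
        + (\<Sum>i<d. (lev r (U i) x + lev r (V i) c) / 2) * gw n a"
    by (simp only: sum.distrib sum_distrib_right)
  also have "\<dots> \<le> ?K * gw n a + ?K * gw n a + ?K * gw n a"
  proof (intro add_mono)
    show "(\<Sum>i<d. \<Sum>y<nh n. (lev r (U i) x + lev r (U i) y) / 2 * cmod (Gbasis n a y c)) \<le> ?K * gw n a"
      using x by (intro order.trans[OF sum_sum_mult_le[where K = ?K]] mult_left_mono[OF sum_norm_Gbasis_col_le K]
          sum_midpoint_le sum_lev_U) auto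
    show "(\<Sum>i<d. \<Sum>z<nh n. (lev r (V i) z + lev r (V i) c) / 2 * cmod (Gbasis n a x z)) \<le> ?K * gw n a"
      using c by (intro order.trans[OF sum_sum_mult_le[where K = ?K]] mult_left_mono[OF sum_norm_Gbasis_row_le K]
          sum_midpoint_le sum_lev_V) auto
    show "(\<Sum>i<d. (lev r (U i) x + lev r (V i) c) / 2) * gw n a \<le> ?K * gw n a"
      using x c by (intro mult_right_mono sum_midpoint_le sum_lev_U sum_lev_V) auto
  qed
  finally show ?thesis by (simp add: mult.commute)
qed

lemma norm_binner_P_T_Ghat_basis_le:
  assumes l: "l < d" and a: "a < n" and j: "j < d" and k: "k < n"
  shows "cmod (binner d n (P_T n r U V (Ghat_basis d n l a)) (Ghat_basis d n j k))
    \<le> 3 * M * gw n a * (gw n k * real (wt n k))"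
proof -
  let ?m = "nh n" and ?PT = "P_T n r U V (\<lambda>_. Gbasis n a)"
  have "P_T n r U V (Ghat_basis d n l a) i x c = dft d i l * ?PT i x c" for i x c
    unfolding Ghat_basis_eq[OF l a] by (rule P_T_scale)
  then have "cmod (binner d n (P_T n r U V (Ghat_basis d n l a)) (Ghat_basis d n j k))
      = cmod (\<Sum>i<d. \<Sum>x<?m. \<Sum>c<?m. (dft d i l * ?PT i x c) * cnj (dft d i j * Gbasis n k x c))"
    unfolding binner_def Ghat_basis_eq[OF j k] by simp
  also have "\<dots> \<le> (\<Sum>i<d. \<Sum>xc\<in>{..<?m} \<times> {..<?m}.
      cmod (?PT i (fst xc) (snd xc)) / real d * cmod (Gbasis n k (fst xc) (snd xc)))"
    unfolding sum.cartesian_product split_def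
    by (intro order.trans[OF norm_sum] sum_mono)
       (use d_pos in \<open>simp add: norm_mult norm_dft field_simps\<close>)
  also have "\<dots> \<le> 3 * M * gw n a * (\<Sum>xc\<in>{..<?m} \<times> {..<?m}. cmod (Gbasis n k (fst xc) (snd xc)))"
  proof (rule sum_sum_mult_le)
    fix xc assume "xc \<in> {..<?m} \<times> {..<?m}"
    then have "(\<Sum>i<d. cmod (?PT i (fst xc) (snd xc))) / real d \<le> 3 * (real d * M) * gw n a / real d"
      by (intro divide_right_mono sum_norm_P_T_Gbasis_le) auto
    then show "(\<Sum>i<d. cmod (?PT i (fst xc) (snd xc)) / real d) \<le> 3 * M * gw n a"
      using d_pos by (simp add: sum_divide_distrib[symmetric])
  qed auto
  also have "(\<Sum>xc\<in>{..<?m} \<times> {..<?m}. cmod (Gbasis n k (fst xc) (snd xc))) = gw n k * real (wt n k)"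
    using sum_norm_Gbasis[of n k] unfolding sum.cartesian_product split_def .
  finally show ?thesis .
qed

lemma norm_PT_coupling_le:
  assumes "jk \<in> {..<d} \<times> {..<n}" "q \<in> {..<d} \<times> {..<n}"
  shows "cmod (PT_coupling d n r U V jk q) \<le> 3 * M"
proof -
  obtain j k l a where jk: "jk = (j, k)" "j < d" "k < n" and q: "q = (l, a)" "l < d" "a < n"
    using assms by auto
  have wa: "1 \<le> wt n a" and wk: "1 \<le> wt n k" using wt_pos n_odd jk q by auto
  have "cmod (PT_coupling d n r U V jk q)
      = cmod (binner d n (P_T n r U V (Ghat_basis d n l a)) (Ghat_basis d n j k))
        * (sqrt (real (wt n a)) / sqrt (real (wt n k)))"
    unfolding PT_coupling_def jk q by (simp add: norm_mult norm_divide)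
  also have "\<dots> \<le> 3 * M * gw n a * (gw n k * real (wt n k)) * (sqrt (real (wt n a)) / sqrt (real (wt n k)))"
    by (rule mult_right_mono[OF norm_binner_P_T_Ghat_basis_le[OF q(2,3) jk(2,3)]]) simp
  also have "\<dots> = 3 * M"
    using wa wk real_sqrt_mult_self[of "real (wt n k)"] by (simp add: field_simps)
  finally show ?thesis .
qed

lemma Gcoef_deviation:
  assumes "jk \<in> {..<d} \<times> {..<n}"
  shows "Gcoef d n (deviation d n r p \<Omega> U V Z) jk
    = bern_dev ({..<d} \<times> {..<n}) p (\<lambda>q. Gcoef d n Z q * PT_coupling d n r U V jk q) \<Omega>"
  unfolding Gcoef_def bern_dev_def binner_deviation sum_divide_distrib
proof (intro sum.cong refl)
  fix q assume q: "q \<in> {..<d} \<times> {..<n}"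
  have "1 \<le> wt n (snd q)" "1 \<le> wt n (snd jk)" using wt_pos n_odd assms q by auto
  then show "complex_of_real ((if q \<in> \<Omega> then 1 else 0) / p - 1) * Ghat_adj d n Z (fst q) (snd q)
        * binner d n (P_T n r U V (Ghat_basis d n (fst q) (snd q))) (Ghat_basis d n (fst jk) (snd jk))
        / complex_of_real (sqrt (real d * real (wt n (snd jk))))
      = ((if q \<in> \<Omega> then 1 else 0) / p - 1) *\<^sub>R
        (binner d n Z (Ghat_basis d n (fst q) (snd q)) / complex_of_real (sqrt (real d * real (wt n (snd q))))
         * PT_coupling d n r U V jk q)"
    using q d_pos
    by (simp add: binner_Ghat_basis_eq_Ghat_adj PT_coupling_def scaleR_conv_of_real real_sqrt_mult
        field_simps mem_Times_iff)
qed

end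

context incoherent_tangent
begin

lemma deviation_tail:
  assumes p: "0 < p" "p \<le> 1" and l: "0 \<le> l"
  shows "bern_prob ({..<d} \<times> {..<n}) p (\<lambda>\<Omega>. normGinf d n (deviation d n r p \<Omega> U V Z)
           \<le> 12 * M * (sqrt (l / p) * normGF d n Z + l / p * normGinf d n Z))
       \<ge> 1 - 4 * real (d * n) * exp (- l)"
proof -
  define S where "S = {..<d} \<times> {..<n}"
  define c where "c jk q = Gcoef d n Z q * PT_coupling d n r U V jk q" for jk q
  have n: "1 \<le> n" using n_odd by (auto elim: oddE)
  have I: "0 \<le> normGinf d n Z" using normGinf_nonneg[OF d_pos n] .
  have c_le: "cmod (c jk q) \<le> 3 * M * normGinf d n Z" if "jk \<in> S" "q \<in> S" for jk q
  proof -
    have "cmod (Gcoef d n Z q) \<le> normGinf d n Z" "cmod (PT_coupling d n r U V jk q) \<le> 3 * M"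
      using that normGinf_ge norm_PT_coupling_le unfolding S_def by blast+
    then show ?thesis unfolding c_def norm_mult by (metis I mult.commute mult_mono norm_ge_zero)
  qed
  have c_sq: "(\<Sum>q\<in>S. (cmod (c jk q))\<^sup>2) \<le> (3 * M * normGF d n Z)\<^sup>2" if "jk \<in> S" for jk
  proof -
    have "(\<Sum>q\<in>S. (cmod (c jk q))\<^sup>2) \<le> (\<Sum>q\<in>S. (cmod (Gcoef d n Z q))\<^sup>2 * (3 * M)\<^sup>2)"
      unfolding c_def norm_mult power_mult_distrib[of "cmod _"]
    proof (intro sum_mono mult_left_mono)
      fix q assume "q \<in> S"
      then have "cmod (PT_coupling d n r U V jk q) \<le> 3 * M"
        using that norm_PT_coupling_le unfolding S_def by blast
      then show "(cmod (PT_coupling d n r U V jk q))\<^sup>2 \<le> (3 * M)\<^sup>2" by (intro power_mono) simp_all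
    qed simp
    then show ?thesis by (simp add: S_def normGF_sq sum_distrib_right[symmetric] power_mult_distrib mult.commute)
  qed
  have thr: "4 * sqrt (l * (3 * M * normGF d n Z)\<^sup>2 / p) + 4 * l * (3 * M * normGinf d n Z) / p
      = 12 * M * (sqrt (l / p) * normGF d n Z + l / p * normGinf d n Z)"
    using M_nonneg normGF_nonneg[of d n Z]
    by (simp add: real_sqrt_mult real_sqrt_divide algebra_simps)
  have "1 - 4 * real (card S) * exp (- l)
      \<le> bern_prob S p (\<lambda>\<Omega>. \<forall>jk\<in>S. cmod (bern_dev S p (c jk) \<Omega>)
           \<le> 4 * sqrt (l * (3 * M * normGF d n Z)\<^sup>2 / p) + 4 * l * (3 * M * normGinf d n Z) / p)"
    using M_nonneg I by (intro bern_prob_all_cmod_dev_le c_le c_sq p l) (auto simp: S_def)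
  also have "\<dots> = bern_prob S p (\<lambda>\<Omega>. \<forall>jk\<in>S. cmod (bern_dev S p (c jk) \<Omega>)
           \<le> 12 * M * (sqrt (l / p) * normGF d n Z + l / p * normGinf d n Z))"
    unfolding thr ..
  also have "\<dots> \<le> bern_prob S p (\<lambda>\<Omega>. normGinf d n (deviation d n r p \<Omega> U V Z)
           \<le> 12 * M * (sqrt (l / p) * normGF d n Z + l / p * normGinf d n Z))"
    using p d_pos n unfolding S_def c_def
    by (intro bern_prob_mono normGinf_le) (auto simp: Gcoef_deviation)
  finally show ?thesis by (simp add: S_def card_cartesian_product)
qed

lemma deviation_whp:
  assumes p: "0 < p" "p \<le> 1"
  shows "bernoulli_prob d n p (\<lambda>\<Omega>. normGinf d n (deviation d n r p \<Omega> U V Z)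
           \<le> 24 * M * (sqrt (ln (real (d * n)) / p) * normGF d n Z
               + ln (real (d * n)) / p * normGinf d n Z))
       \<ge> 1 - 4 * real (d * n) powr (- 1)"
proof -
  let ?L = "ln (real (d * n))" and ?F = "normGF d n Z" and ?I = "normGinf d n Z"
  have n: "1 \<le> n" using n_odd by (auto elim: oddE)
  then have "1 \<le> d * n" using d_pos by (metis mult_le_mono nat_mult_1)
  then have dn: "1 \<le> real (d * n)" by linarith
  have "sqrt (2 * ?L / p) = sqrt 2 * sqrt (?L / p)"
    by (simp add: real_sqrt_mult[symmetric])
  also have "\<dots> \<le> 2 * sqrt (?L / p)"
    using sqrt2_less_2 dn p by (intro mult_right_mono) auto
  finally have "sqrt (2 * ?L / p) * ?F \<le> 2 * sqrt (?L / p) * ?F"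
    using normGF_nonneg by (rule mult_right_mono)
  then have "sqrt (2 * ?L / p) * ?F + 2 * ?L / p * ?I \<le> 2 * (sqrt (?L / p) * ?F + ?L / p * ?I)"
    by (simp add: algebra_simps)
  then have "12 * M * (sqrt (2 * ?L / p) * ?F + 2 * ?L / p * ?I)
      \<le> 12 * M * (2 * (sqrt (?L / p) * ?F + ?L / p * ?I))"
    using M_nonneg by (intro mult_left_mono) auto
  then have threshold: "12 * M * (sqrt (2 * ?L / p) * ?F + 2 * ?L / p * ?I)
      \<le> 24 * M * (sqrt (?L / p) * ?F + ?L / p * ?I)"
    by (simp only: mult.assoc mult.left_commute[of 2])
  have "exp (2 * ?L) = exp ?L * exp ?L" by (simp add: exp_add[symmetric])
  then have "1 - 4 * real (d * n) powr (- 1) = 1 - 4 * real (d * n) * exp (- (2 * ?L))"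
    using dn by (simp add: exp_minus powr_minus field_simps)
  also have "\<dots> \<le> bern_prob ({..<d} \<times> {..<n}) p (\<lambda>\<Omega>. normGinf d n (deviation d n r p \<Omega> U V Z)
      \<le> 12 * M * (sqrt (2 * ?L / p) * ?F + 2 * ?L / p * ?I))"
    using deviation_tail[OF p, of "2 * ?L" Z] dn by simp
  also have "\<dots> \<le> bern_prob ({..<d} \<times> {..<n}) p (\<lambda>\<Omega>. normGinf d n (deviation d n r p \<Omega> U V Z)
      \<le> 24 * M * (sqrt (?L / p) * ?F + ?L / p * ?I))"
    using p threshold by (intro bern_prob_mono) auto
  finally show ?thesis unfolding bernoulli_prob_eq_bern_prob .
qed

end

theorem lemma4p5:
  shows "\<exists>C>0. \<exists>c1>0. \<exists>c2>0. \<forall>(d::nat) (n::nat) (r::nat) (\<mu>0::real) (p::real)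
      (Zn :: nat \<Rightarrow> nat \<Rightarrow> nat \<Rightarrow> complex) U V (\<sigma> :: nat \<Rightarrow> nat \<Rightarrow> real)
      (Z :: nat \<Rightarrow> nat \<Rightarrow> nat \<Rightarrow> complex).
      1 \<le> d \<longrightarrow> 1 \<le> n \<longrightarrow> odd n \<longrightarrow> 0 < p \<longrightarrow> p \<le> 1 \<longrightarrow>
      compact_svd d n r Zn U \<sigma> V \<longrightarrow> avg_incoherent d n r \<mu>0 U V \<longrightarrow>
      bernoulli_prob d n p (\<lambda>\<Omega>.
         normGinf d n (deviation d n r p \<Omega> U V Z)
           \<le> C * (\<mu>0 * real r / real n) *
              (sqrt (ln (real (d * n)) / p) * normGF d n Z
               + ln (real (d * n)) / p * normGinf d n Z))
        \<ge> 1 - c1 * real (d * n) powr (- c2)"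
proof (rule exI[of _ 24], intro conjI, simp, rule exI[of _ 4], intro conjI, simp,
       rule exI[of _ 1], intro conjI allI impI, simp)
  fix d n r :: nat and \<mu>0 p :: real and \<sigma> :: "nat \<Rightarrow> nat \<Rightarrow> real"
    and Zn U V Z :: "nat \<Rightarrow> nat \<Rightarrow> nat \<Rightarrow> complex"
  assume d: "1 \<le> d" and "1 \<le> n" and n: "odd n" and p: "0 < p" "p \<le> 1"
    and svd: "compact_svd d n r Zn U \<sigma> V" and inc: "avg_incoherent d n r \<mu>0 U V"
  interpret incoherent_tangent d n r U V "\<mu>0 * real r / real n"
  proof unfold_locales
    show "orthonormal_cols (nh n) r (U i)" "orthonormal_cols (nh n) r (V i)" if "i < d" for i
      using svd that unfolding compact_svd_def orthonormal_cols_def by auto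
    show "(\<Sum>i<d. lev r (U i) y) \<le> real d * (\<mu>0 * real r / real n)"
      and "(\<Sum>i<d. lev r (V i) y) \<le> real d * (\<mu>0 * real r / real n)" if "y < nh n" for y
      using inc that d unfolding avg_incoherent_def lev_def by (auto simp: field_simps)
  qed (use d n in auto)
  show "bernoulli_prob d n p (\<lambda>\<Omega>. normGinf d n (deviation d n r p \<Omega> U V Z)
           \<le> 24 * (\<mu>0 * real r / real n) * (sqrt (ln (real (d * n)) / p) * normGF d n Z
               + ln (real (d * n)) / p * normGinf d n Z))
        \<ge> 1 - 4 * real (d * n) powr (- 1)"
    by (rule deviation_whp[OF p])
qed

end
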